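(* $$\max_{U_1,U_2\in\mathcal R}\ \langle 2|U_2\,\mathcal M_2(U_1|1\rangle\langle 1|U_1^\dagger)\,U_2^\dagger|2\rangle=\frac12 .$$
   Context: Basis of $\mathbb C^3$: $|1\rangle,|2\rangle,|3\rangle$ (standard basis). Spin-1 matrices in this basis: $J_y=\frac{1}{\sqrt2}\begin{pmatrix}0&-i&0\\ i&0&-i\\ 0&i&0\end{pmatrix}$, $J_z=\mathrm{diag}(1,0,-1)$. Define $Z(\alpha,\beta,\gamma)=e^{-i\alpha J_z}e^{-i\beta J_y}e^{-i\gamma J_z}$. Let $\mathcal R=\{Z(\alpha,\beta,\gamma):\alpha,\beta,\gamma\in\mathbb R\}\subset U(3)$. For $j\in\{1,2\}$ let $P_j=|j\rangle\langle j|$ and $\mathcal M_j(\rho)=P_j\rho P_j+(\mathbb I-P_j)\rho(\mathbb I-P_j)$ (non-selective measurement of the population of $|j\rangle$). *)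

theory Defs
  imports "HOL-Analysis.Analysis"
begin

text \<open>3x3 complex matrices, indexed by the finite type 3. The basis vectors
|1>, |2>, |3> correspond to the indices 1, 2, 3 of type 3 (note 3 = 0 in type 3).\<close>

type_synonym cmat3 = "complex^3^3"

definition Jy :: cmat3 where
  "Jy = (\<chi> i j.
      if i = 1 \<and> j = 2 then - \<i> / sqrt 2
      else if i = 2 \<and> j = 1 then \<i> / sqrt 2
      else if i = 2 \<and> j = 3 then - \<i> / sqrt 2
      else if i = 3 \<and> j = 2 then \<i> / sqrt 2
      else 0)"

definition Jz :: cmat3 where
  "Jz = (\<chi> i j. if i = j then (if i = 1 then 1 else if i = 2 then 0 else -1) else 0)"

fun mpow :: "cmat3 \<Rightarrow> nat \<Rightarrow> cmat3" where
  "mpow A 0 = mat 1"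
| "mpow A (Suc n) = A ** mpow A n"

definition mexp :: "cmat3 \<Rightarrow> cmat3" where
  "mexp A = (\<chi> i j. (\<Sum>n. mpow A n $ i $ j / of_nat (fact n)))"

definition msc :: "complex \<Rightarrow> cmat3 \<Rightarrow> cmat3" where
  "msc c A = (\<chi> i j. c * A $ i $ j)"

definition Zrot :: "real \<Rightarrow> real \<Rightarrow> real \<Rightarrow> cmat3" where
  "Zrot \<alpha> \<beta> \<gamma> = mexp (msc (- \<i> * complex_of_real \<alpha>) Jz) ** mexp (msc (- \<i> * complex_of_real \<beta>) Jy)
                 ** mexp (msc (- \<i> * complex_of_real \<gamma>) Jz)"

definition Rset :: "cmat3 set" where
  "Rset = {Zrot \<alpha> \<beta> \<gamma> | \<alpha> \<beta> \<gamma>. True}"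

definition adj :: "cmat3 \<Rightarrow> cmat3" where
  "adj U = (\<chi> i j. cnj (U $ j $ i))"

definition proj :: "3 \<Rightarrow> cmat3" where
  "proj k = (\<chi> i j. if i = k \<and> j = k then 1 else 0)"

definition Meas :: "3 \<Rightarrow> cmat3 \<Rightarrow> cmat3" where
  "Meas k \<rho> = proj k ** \<rho> ** proj k + (mat 1 - proj k) ** \<rho> ** (mat 1 - proj k)"

definition fval :: "cmat3 \<Rightarrow> cmat3 \<Rightarrow> complex" where
  "fval U1 U2 = (U2 ** Meas 2 (U1 ** proj 1 ** adj U1) ** adj U2) $ 2 $ 2"

end

theory Submission
  imports Defs
begin

text \<open>The generators \<open>K = -i J\<^sub>z\<close> and \<open>K = -i J\<^sub>y\<close> satisfy \<open>K\<^sup>3 = -K\<close>, so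
\<open>exp (t K) = I + sin t K + (1 - cos t) K\<^sup>2\<close> (Rodrigues' formula). Hence \<open>exp (-i \<alpha> J\<^sub>z)\<close> is
diagonal with unimodular entries, and every entry of \<open>Z(\<alpha>,\<beta>,\<gamma>)\<close> has the modulus of the
corresponding entry of the Wigner matrix \<open>exp (-i \<beta> J\<^sub>y)\<close>.
The measured population is \<open>|V[2,2] U[2,1]|\<^sup>2 + |V[2,1] U[1,1] + V[2,3] U[3,1]|\<^sup>2\<close> for
\<open>U = U\<^sub>1\<close>, \<open>V = U\<^sub>2\<close>. With \<open>V\<close> of angle \<open>\<beta>\<close>, the first term is at most \<open>cos\<^sup>2 \<beta> / 2\<close>;
since \<open>|V[2,1]| = |V[2,3]|\<close> and \<open>|U[1,1]| + |U[3,1]| = 1\<close>, the triangle inequality bounds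
the second by \<open>sin\<^sup>2 \<beta> / 2\<close>. Both bounds are attained by \<open>U = I\<close>, \<open>V = Z(0, \<pi>/2, 0)\<close>.\<close>

lemma msc_mult_left: "msc c A ** B = msc c (A ** B)"
  by (simp add: msc_def matrix_matrix_mult_def vec_eq_iff sum_distrib_left mult.assoc)

lemma msc_mult_right: "A ** msc c B = msc c (A ** B)"
  by (simp add: msc_def matrix_matrix_mult_def vec_eq_iff sum_distrib_left mult.left_commute)

lemma msc_msc: "msc a (msc b A) = msc (a * b) A"
  by (simp add: msc_def vec_eq_iff mult.assoc)

lemma matrix_diff_ldistrib:
  fixes A :: "'a::ring_1^'n^'m"
  shows "A ** (B - C) = A ** B - A ** C"
  by (simp add: matrix_matrix_mult_def vec_eq_iff sum_subtractf right_diff_distrib)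

lemma sin_coeff_fact_Suc: "sin_coeff (Suc n) * fact (Suc n) = cos_coeff n * fact n"
  by (simp add: sin_coeff_Suc)

lemma cos_coeff_fact_Suc: "cos_coeff (Suc n) * fact (Suc n) = - sin_coeff n * fact n"
  by (simp add: cos_coeff_Suc)

text \<open>The signs \<open>sin_coeff n * fact n\<close> and \<open>cos_coeff n * fact n\<close> encode
\<open>K^(2m+1) = (-1)^m K\<close> and \<open>K^(2m+2) = (-1)^m K^2\<close>; for \<open>n = 0\<close> the first summand supplies \<open>I\<close>.\<close>

lemma mpow_msc_cube_neg:
  assumes cube: "K ** K ** K = - K"
  shows "mpow (msc t K) n =
    (if n = 0 then mat 1 + K ** K else 0)
    + msc (of_real (sin_coeff n * fact n) * t ^ n) K
    - msc (of_real (cos_coeff n * fact n) * t ^ n) (K ** K)"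
proof (induction n)
  case 0
  show ?case by (simp add: msc_def vec_eq_iff)
next
  case (Suc n)
  have K_cube: "K ** (K ** K) = - K" using cube by (simp add: matrix_mul_assoc)
  have "mpow (msc t K) (Suc n) =
      (if n = 0 then msc t K + msc t (- K) else 0)
      + msc (of_real (sin_coeff n * fact n) * t ^ n) (msc t (K ** K))
      - msc (of_real (cos_coeff n * fact n) * t ^ n) (msc t (- K))"
    by (simp add: Suc.IH matrix_add_ldistrib matrix_diff_ldistrib msc_mult_left msc_mult_right
        K_cube, simp add: msc_def vec_eq_iff)
  then show ?case
    unfolding sin_coeff_fact_Suc cos_coeff_fact_Suc
    by (simp add: msc_def vec_eq_iff algebra_simps del: of_real_mult of_real_fact fact_Suc)
qed

lemma mexp_msc_cube_neg:
  assumes cube: "K ** K ** K = - K"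
  shows "mexp (msc t K) = mat 1 + msc (sin t) K + msc (1 - cos t) (K ** K)"
proof -
  have "(\<lambda>n. mpow (msc t K) n $ i $ j / of_nat (fact n)) sums
      ((mat 1 + K ** K) $ i $ j + sin t * K $ i $ j - cos t * (K ** K) $ i $ j)" for i j
  proof -
    have "(\<lambda>n. (if n = 0 then (mat 1 + K ** K) $ i $ j else 0)
        + (sin_coeff n *\<^sub>R t ^ n) * K $ i $ j - (cos_coeff n *\<^sub>R t ^ n) * (K ** K) $ i $ j)
      sums ((mat 1 + K ** K) $ i $ j + sin t * K $ i $ j - cos t * (K ** K) $ i $ j)"
      by (intro sums_add sums_diff sums_mult2 sums_single sin_converges cos_converges)
    moreover have "(\<lambda>n. mpow (msc t K) n $ i $ j / of_nat (fact n)) =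
      (\<lambda>n. (if n = 0 then (mat 1 + K ** K) $ i $ j else 0)
        + (sin_coeff n *\<^sub>R t ^ n) * K $ i $ j - (cos_coeff n *\<^sub>R t ^ n) * (K ** K) $ i $ j)"
      unfolding mpow_msc_cube_neg[OF cube]
      by (auto simp add: msc_def scaleR_conv_of_real field_simps)
    ultimately show ?thesis by simp
  qed
  then have "mexp (msc t K) $ i $ j = (mat 1 + K ** K) $ i $ j + sin t * K $ i $ j - cos t * (K ** K) $ i $ j"
    for i j unfolding mexp_def by (simp add: sums_iff)
  then show ?thesis by (simp add: msc_def vec_eq_iff algebra_simps)
qed
lemma sqrt2_mult_self: "complex_of_real (sqrt 2) * complex_of_real (sqrt 2) = 2"
  by (simp flip: of_real_mult)

lemma Jz_generator_cube: "msc (- \<i>) Jz ** msc (- \<i>) Jz ** msc (- \<i>) Jz = - msc (- \<i>) Jz"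
  by (simp add: msc_def Jz_def matrix_matrix_mult_def sum_3 vec_eq_iff forall_3)

lemma Jy_generator_cube: "msc (- \<i>) Jy ** msc (- \<i>) Jy ** msc (- \<i>) Jy = - msc (- \<i>) Jy"
  by (simp add: msc_def Jy_def matrix_matrix_mult_def sum_3 vec_eq_iff forall_3 field_simps sqrt2_mult_self)

lemma mexp_Jz: "mexp (msc (- \<i> * of_real \<alpha>) Jz) =
    (\<chi> i j. if i = j then exp (- \<i> * of_real \<alpha> * Jz $ i $ i) else 0)"
proof -
  have rodrigues: "mexp (msc (- \<i> * of_real \<alpha>) Jz) =
      mat 1 + msc (sin (of_real \<alpha>)) (msc (- \<i>) Jz) + msc (1 - cos (of_real \<alpha>)) (msc (- \<i>) Jz ** msc (- \<i>) Jz)"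
    using mexp_msc_cube_neg[OF Jz_generator_cube, of "of_real \<alpha>"] by (simp add: msc_msc mult.commute)
  have euler: "exp (- \<i> * of_real \<alpha>) = cos (of_real \<alpha>) - \<i> * sin (of_real \<alpha>)"
    "exp (\<i> * of_real \<alpha>) = cos (of_real \<alpha>) + \<i> * sin (of_real \<alpha>)"
    using exp_Euler[of "- of_real \<alpha>"] exp_Euler[of "of_real \<alpha>"] by simp_all
  show ?thesis unfolding rodrigues using euler
    by (simp add: msc_def Jz_def matrix_matrix_mult_def sum_3 vec_eq_iff forall_3 mat_def algebra_simps)
qed

lemma mexp_Jy_entries:
  fixes \<beta> :: real
  defines "D \<equiv> mexp (msc (- \<i> * of_real \<beta>) Jy)"
  shows "D $ 1 $ 1 = of_real ((1 + cos \<beta>) / 2)" "D $ 2 $ 1 = of_real (sin \<beta> / sqrt 2)"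
    "D $ 3 $ 1 = of_real ((1 - cos \<beta>) / 2)" "D $ 2 $ 2 = of_real (cos \<beta>)"
    "D $ 2 $ 3 = of_real (- sin \<beta> / sqrt 2)"
proof -
  have "D = mat 1 + msc (of_real (sin \<beta>)) (msc (- \<i>) Jy)
      + msc (of_real (1 - cos \<beta>)) (msc (- \<i>) Jy ** msc (- \<i>) Jy)"
    using mexp_msc_cube_neg[OF Jy_generator_cube, of "of_real \<beta>"]
    by (simp add: D_def msc_msc mult.commute sin_of_real cos_of_real)
  then show "D $ 1 $ 1 = of_real ((1 + cos \<beta>) / 2)" "D $ 2 $ 1 = of_real (sin \<beta> / sqrt 2)"
    "D $ 3 $ 1 = of_real ((1 - cos \<beta>) / 2)" "D $ 2 $ 2 = of_real (cos \<beta>)"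
    "D $ 2 $ 3 = of_real (- sin \<beta> / sqrt 2)"
    by (simp_all add: msc_def Jy_def matrix_matrix_mult_def sum_3 mat_def field_simps sqrt2_mult_self)
qed

lemma diagonal_matrix_mult_entry:
  fixes A :: "'a::comm_semiring_1^'n^'n"
  shows "((\<chi> i j. if i = j then d i else 0) ** A ** (\<chi> i j. if i = j then e i else 0)) $ i $ j
    = d i * A $ i $ j * e j"
  by (simp add: matrix_matrix_mult_def if_distrib if_distribR cong: if_cong)

lemma Zrot_entry: "Zrot \<alpha> \<beta> \<gamma> $ i $ j =
    exp (- \<i> * of_real \<alpha> * Jz $ i $ i) * mexp (msc (- \<i> * of_real \<beta>) Jy) $ i $ j
    * exp (- \<i> * of_real \<gamma> * Jz $ j $ j)"
  unfolding Zrot_def mexp_Jz by (rule diagonal_matrix_mult_entry)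

lemma norm_exp_Jz: "cmod (exp (- \<i> * of_real \<alpha> * Jz $ i $ i)) = 1"
  using exhaust_3[of i] by (auto simp add: Jz_def)

lemma norm_Zrot_entry: "cmod (Zrot \<alpha> \<beta> \<gamma> $ i $ j) = cmod (mexp (msc (- \<i> * of_real \<beta>) Jy) $ i $ j)"
  unfolding Zrot_entry norm_mult norm_exp_Jz by simp

lemma norm_Zrot_entries:
  "cmod (Zrot \<alpha> \<beta> \<gamma> $ 1 $ 1) = (1 + cos \<beta>) / 2"
  "cmod (Zrot \<alpha> \<beta> \<gamma> $ 2 $ 1) = \<bar>sin \<beta>\<bar> / sqrt 2"
  "cmod (Zrot \<alpha> \<beta> \<gamma> $ 3 $ 1) = (1 - cos \<beta>) / 2"
  "cmod (Zrot \<alpha> \<beta> \<gamma> $ 2 $ 2) = \<bar>cos \<beta>\<bar>"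
  "cmod (Zrot \<alpha> \<beta> \<gamma> $ 2 $ 3) = \<bar>sin \<beta>\<bar> / sqrt 2"
proof -
  have "\<bar>1 + cos \<beta>\<bar> = 1 + cos \<beta>" "\<bar>1 - cos \<beta>\<bar> = 1 - cos \<beta>"
    using cos_ge_minus_one[of \<beta>] cos_le_one[of \<beta>] by linarith+
  then show "cmod (Zrot \<alpha> \<beta> \<gamma> $ 1 $ 1) = (1 + cos \<beta>) / 2"
    "cmod (Zrot \<alpha> \<beta> \<gamma> $ 2 $ 1) = \<bar>sin \<beta>\<bar> / sqrt 2"
    "cmod (Zrot \<alpha> \<beta> \<gamma> $ 3 $ 1) = (1 - cos \<beta>) / 2"
    "cmod (Zrot \<alpha> \<beta> \<gamma> $ 2 $ 2) = \<bar>cos \<beta>\<bar>"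
    "cmod (Zrot \<alpha> \<beta> \<gamma> $ 2 $ 3) = \<bar>sin \<beta>\<bar> / sqrt 2"
    unfolding norm_Zrot_entry mexp_Jy_entries norm_of_real by (simp_all add: abs_divide)
qed

lemma fval_eq_norms: "fval U1 U2 = of_real ((cmod (U2 $ 2 $ 2) * cmod (U1 $ 2 $ 1))\<^sup>2
    + (cmod (U2 $ 2 $ 1 * U1 $ 1 $ 1 + U2 $ 2 $ 3 * U1 $ 3 $ 1))\<^sup>2)"
proof -
  have "fval U1 U2 = (U2 $ 2 $ 2 * U1 $ 2 $ 1) * cnj (U2 $ 2 $ 2 * U1 $ 2 $ 1)
      + (U2 $ 2 $ 1 * U1 $ 1 $ 1 + U2 $ 2 $ 3 * U1 $ 3 $ 1) * cnj (U2 $ 2 $ 1 * U1 $ 1 $ 1 + U2 $ 2 $ 3 * U1 $ 3 $ 1)"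
    unfolding fval_def Meas_def
    by (simp add: matrix_matrix_mult_def sum_3 proj_def adj_def mat_def algebra_simps)
  then show ?thesis
    by (simp only: complex_norm_square[symmetric] of_real_add norm_mult power_mult_distrib)
qed

lemma Re_fval_Zrot_le: "Re (fval (Zrot \<alpha>1 \<beta>1 \<gamma>1) (Zrot \<alpha>2 \<beta>2 \<gamma>2)) \<le> 1 / 2"
proof -
  let ?U1 = "Zrot \<alpha>1 \<beta>1 \<gamma>1" and ?U2 = "Zrot \<alpha>2 \<beta>2 \<gamma>2"
  let ?w = "?U2 $ 2 $ 1 * ?U1 $ 1 $ 1 + ?U2 $ 2 $ 3 * ?U1 $ 3 $ 1"
  have "cmod ?w \<le> cmod (?U2 $ 2 $ 1) * cmod (?U1 $ 1 $ 1) + cmod (?U2 $ 2 $ 3) * cmod (?U1 $ 3 $ 1)"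
    unfolding norm_mult[symmetric] by (rule norm_triangle_ineq)
  also have "\<dots> = \<bar>sin \<beta>2\<bar> / sqrt 2"
    unfolding norm_Zrot_entries by (simp add: field_simps)
  finally have "(cmod ?w)\<^sup>2 \<le> (\<bar>sin \<beta>2\<bar> / sqrt 2)\<^sup>2"
    by (rule power_mono) simp
  then have interference: "(cmod ?w)\<^sup>2 \<le> (sin \<beta>2)\<^sup>2 / 2"
    by (simp add: power_divide)
  have "(sin \<beta>1)\<^sup>2 \<le> 1"
    by (simp add: abs_square_le_1)
  then have population: "(\<bar>cos \<beta>2\<bar> * (\<bar>sin \<beta>1\<bar> / sqrt 2))\<^sup>2 \<le> (cos \<beta>2)\<^sup>2 / 2"
    by (simp add: power_mult_distrib power_divide mult_left_le)
  have "Re (fval ?U1 ?U2) \<le> (cos \<beta>2)\<^sup>2 / 2 + (sin \<beta>2)\<^sup>2 / 2"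
    unfolding fval_eq_norms Re_complex_of_real norm_Zrot_entries using interference population by linarith
  also have "\<dots> = 1 / 2"
    by (simp add: add_divide_distrib[symmetric])
  finally show ?thesis .
qed

lemma fval_Zrot_eq_half: "fval (Zrot 0 0 0) (Zrot 0 (pi / 2) 0) = 1 / 2"
proof -
  have "Zrot 0 0 0 $ 3 $ 1 = 0"
    using norm_Zrot_entries(3)[of 0 0 0] by simp
  then show ?thesis
    by (simp add: fval_eq_norms norm_mult norm_Zrot_entries power_divide)
qed

theorem theorem3:
  shows "(\<forall>U1\<in>Rset. \<forall>U2\<in>Rset. Re (fval U1 U2) \<le> 1/2)
       \<and> (\<exists>U1\<in>Rset. \<exists>U2\<in>Rset. fval U1 U2 = 1/2)"
  using Re_fval_Zrot_le fval_Zrot_eq_half unfolding Rset_def by blast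

end
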